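(* Let $\Lambda$ be a left cancellative small category and $v\in\Lambda^0$. Then (a) every maximal filter in $\mathcal D^{(0)}_v$ belongs to $v\Lambda^*$; (b) every totally ordered (by inclusion) subset of $v\Lambda^*$ has an upper bound in $v\Lambda^*$ (so Zorn's lemma applies to $v\Lambda^*$); and (c) every maximal element of $v\Lambda^*$ (with respect to inclusion) is a maximal filter in $\mathcal D^{(0)}_v$.
   Context: A left cancellative small category (LCSC) is a small category $\Lambda$ such that $\alpha\beta=\alpha\gamma$ implies $\beta=\gamma$. Composition $\alpha\beta$ is defined when $s(\alpha)=r(\beta)$; $\Lambda^0$ is the set of objects; $v\Lambda=\{\alpha:r(\alpha)=v\}$. For $\alpha\in\Lambda$, $\tau^\alpha(\beta)=\alpha\beta$ on $s(\alpha)\Lambda$ and $\sigma^\alpha:\alpha\Lambda\to s(\alpha)\Lambda$ is its inverse. A zigzag is a tuple $\zeta=(\alpha_1,\beta_1,\dots,\alpha_n,\beta_n)$ with $r(\alpha_i)=r(\beta_i)$ and $s(\alpha_{i+1})=s(\beta_i)$, $s(\zeta)=s(\beta_n)$; the zigzag map $\varphi_\zeta=\sigma^{\alpha_1}\circ\tau^{\beta_1}\circ\cdots\circ\sigma^{\alpha_n}\circ\tau^{\beta_n}$ (partial map) has domain $A(\zeta)\subseteq s(\zeta)\Lambda$. $\mathcal D^{(0)}_v$ is the set of nonempty $A(\zeta)$ with $s(\zeta)=v$ (closed under nonempty intersection). A filter in $\mathcal D^{(0)}_v$ is a nonempty $C\subseteq\mathcal D^{(0)}_v$ closed under intersection and under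 supersets within $\mathcal D^{(0)}_v$ (so its members are nonempty). A finite $\mathcal F\subseteq\mathcal D^{(0)}_v$ covers the filter $C$ if some $E\in C$ satisfies $E\subseteq\bigcup\mathcal F$. $v\Lambda^*$ is the set of filters $C$ in $\mathcal D^{(0)}_v$ such that every finite $\mathcal F\subseteq\mathcal D^{(0)}_v$ with $\mathcal F\cap C=\varnothing$ does not cover $C$. *)

theory Defs
  imports Main
begin

text \<open>A small category: objects Obj (type 'o), morphisms Mor (type 'a),
 source s, range r, identities idm, composition cmp (cmp a b = a b, defined when s a = r b).\<close>

definition lcsc :: "'o set \<Rightarrow> 'a set \<Rightarrow> ('a \<Rightarrow> 'o) \<Rightarrow> ('a \<Rightarrow> 'o)
   \<Rightarrow> ('o \<Rightarrow> 'a) \<Rightarrow> ('a \<Rightarrow> 'a \<Rightarrow> 'a) \<Rightarrow> bool" where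
  "lcsc Obj Mor s r idm cmp \<longleftrightarrow>
     (\<forall>a\<in>Mor. s a \<in> Obj \<and> r a \<in> Obj) \<and>
     (\<forall>v\<in>Obj. idm v \<in> Mor \<and> s (idm v) = v \<and> r (idm v) = v) \<and>
     (\<forall>a\<in>Mor. \<forall>b\<in>Mor. s a = r b \<longrightarrow>
          cmp a b \<in> Mor \<and> r (cmp a b) = r a \<and> s (cmp a b) = s b) \<and>
     (\<forall>a\<in>Mor. \<forall>b\<in>Mor. \<forall>c\<in>Mor. s a = r b \<longrightarrow> s b = r c \<longrightarrow>
          cmp (cmp a b) c = cmp a (cmp b c)) \<and>
     (\<forall>a\<in>Mor. cmp (idm (r a)) a = a \<and> cmp a (idm (s a)) = a) \<and>
     (\<forall>a\<in>Mor. \<forall>b\<in>Mor. \<forall>c\<in>Mor. s a = r b \<longrightarrow> s a = r c \<longrightarrow>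
          cmp a b = cmp a c \<longrightarrow> b = c)"

definition is_zigzag :: "'a set \<Rightarrow> ('a \<Rightarrow> 'o) \<Rightarrow> ('a \<Rightarrow> 'o) \<Rightarrow> ('a \<times> 'a) list \<Rightarrow> bool" where
  "is_zigzag Mor s r zs \<longleftrightarrow> zs \<noteq> [] \<and>
     (\<forall>p\<in>set zs. fst p \<in> Mor \<and> snd p \<in> Mor \<and> r (fst p) = r (snd p)) \<and>
     (\<forall>i. Suc i < length zs \<longrightarrow> s (fst (zs ! Suc i)) = s (snd (zs ! i)))"

definition zz_src :: "('a \<Rightarrow> 'o) \<Rightarrow> ('a \<times> 'a) list \<Rightarrow> 'o" where
  "zz_src s zs = s (snd (last zs))"

definition tau_map :: "'a set \<Rightarrow> ('a \<Rightarrow> 'o) \<Rightarrow> ('a \<Rightarrow> 'o) \<Rightarrow> ('a \<Rightarrow> 'a \<Rightarrow> 'a)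
   \<Rightarrow> 'a \<Rightarrow> 'a \<Rightarrow> 'a option" where
  "tau_map Mor s r cmp b g = (if g \<in> Mor \<and> r g = s b then Some (cmp b g) else None)"

definition sigma_map :: "'a set \<Rightarrow> ('a \<Rightarrow> 'o) \<Rightarrow> ('a \<Rightarrow> 'o) \<Rightarrow> ('a \<Rightarrow> 'a \<Rightarrow> 'a)
   \<Rightarrow> 'a \<Rightarrow> 'a \<Rightarrow> 'a option" where
  "sigma_map Mor s r cmp a d =
     (if \<exists>e\<in>Mor. r e = s a \<and> cmp a e = d
      then Some (THE e. e \<in> Mor \<and> r e = s a \<and> cmp a e = d) else None)"

text \<open>phi_zeta = sigma^{a1} o tau^{b1} o ... o sigma^{an} o tau^{bn}, as a partial map.\<close>
fun zz_map :: "'a set \<Rightarrow> ('a \<Rightarrow> 'o) \<Rightarrow> ('a \<Rightarrow> 'o) \<Rightarrow> ('a \<Rightarrow> 'a \<Rightarrow> 'a)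
   \<Rightarrow> ('a \<times> 'a) list \<Rightarrow> 'a \<Rightarrow> 'a option" where
  "zz_map Mor s r cmp [] g = Some g"
| "zz_map Mor s r cmp ((a, b) # zs) g =
     Option.bind (zz_map Mor s r cmp zs g)
       (\<lambda>d. Option.bind (tau_map Mor s r cmp b d) (sigma_map Mor s r cmp a))"

definition zz_dom :: "'a set \<Rightarrow> ('a \<Rightarrow> 'o) \<Rightarrow> ('a \<Rightarrow> 'o) \<Rightarrow> ('a \<Rightarrow> 'a \<Rightarrow> 'a)
   \<Rightarrow> ('a \<times> 'a) list \<Rightarrow> 'a set" where
  "zz_dom Mor s r cmp zs =
     {g \<in> Mor. r g = zz_src s zs \<and> zz_map Mor s r cmp zs g \<noteq> None}"

definition D0 :: "'a set \<Rightarrow> ('a \<Rightarrow> 'o) \<Rightarrow> ('a \<Rightarrow> 'o) \<Rightarrow> ('a \<Rightarrow> 'a \<Rightarrow> 'a) \<Rightarrow> 'o \<Rightarrow> 'a set set" where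
  "D0 Mor s r cmp v =
     {E. \<exists>zs. is_zigzag Mor s r zs \<and> zz_src s zs = v \<and> E = zz_dom Mor s r cmp zs \<and> E \<noteq> {}}"

definition is_filter_in :: "'b set set \<Rightarrow> 'b set set \<Rightarrow> bool" where
  "is_filter_in D C \<longleftrightarrow> C \<noteq> {} \<and> C \<subseteq> D \<and>
     (\<forall>E\<in>C. \<forall>F\<in>C. E \<inter> F \<in> C) \<and>
     (\<forall>E\<in>C. \<forall>F\<in>D. E \<subseteq> F \<longrightarrow> F \<in> C)"

definition is_maximal_filter_in :: "'b set set \<Rightarrow> 'b set set \<Rightarrow> bool" where
  "is_maximal_filter_in D C \<longleftrightarrow> is_filter_in D C \<and>
     (\<forall>C'. is_filter_in D C' \<and> C \<subseteq> C' \<longrightarrow> C' = C)"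

definition covers :: "'b set set \<Rightarrow> 'b set set \<Rightarrow> bool" where
  "covers F C \<longleftrightarrow> (\<exists>E\<in>C. E \<subseteq> \<Union>F)"

definition vLambda_star :: "'a set \<Rightarrow> ('a \<Rightarrow> 'o) \<Rightarrow> ('a \<Rightarrow> 'o) \<Rightarrow> ('a \<Rightarrow> 'a \<Rightarrow> 'a) \<Rightarrow> 'o \<Rightarrow> 'a set set set" where
  "vLambda_star Mor s r cmp v =
     {C. is_filter_in (D0 Mor s r cmp v) C \<and>
         (\<forall>F. finite F \<and> F \<subseteq> D0 Mor s r cmp v \<and> F \<inter> C = {} \<longrightarrow> \<not> covers F C)}"

end

theory Submission imports Defs begin

text \<open>
Reversing a zigzag \<open>\<zeta>\<close> gives a zigzag \<open>\<zeta>\<^sup>-\<^sup>1\<close> whose map inverts \<open>\<phi>\<^sub>\<zeta>\<close>, by left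
cancellation; hence \<open>\<zeta>\<^sup>-\<^sup>1\<zeta>\<xi>\<^sup>-\<^sup>1\<xi>\<close> is the identity on exactly \<open>A(\<zeta>) \<inter> A(\<xi>)\<close>, and
\<open>\<D>\<^sup>(\<^sup>0\<^sup>)\<^sub>v\<close> is a family of nonempty sets closed under nonempty intersection.
Everything else holds for any such family \<open>D\<close>.  A maximal filter \<open>C\<close> contains every
\<open>G \<in> D\<close> meeting all its members (otherwise \<open>C\<close> and \<open>G\<close> generate a larger filter), so each
member of a finite \<open>F\<close> disjoint from \<open>C\<close> is missed by some member of \<open>C\<close>; intersecting these
witnesses shows that \<open>F\<close> does not cover \<open>C\<close>.  Unions of chains preserve the filter axioms
and non-covering.  Finally, a maximal element of \<open>v\<Lambda>\<^sup>*\<close> extends by Zorn's lemma to a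
maximal filter, which lies in \<open>v\<Lambda>\<^sup>*\<close> by the first part, so the two coincide.
\<close>

section \<open>Filters in families closed under nonempty intersection\<close>

definition uncoverable :: "'b set set \<Rightarrow> 'b set set \<Rightarrow> bool" where
  "uncoverable D C \<longleftrightarrow> (\<forall>F. finite F \<and> F \<subseteq> D \<and> F \<inter> C = {} \<longrightarrow> \<not> covers F C)"

lemma is_filter_inD:
  assumes "is_filter_in D C"
  shows is_filter_in_nonempty: "C \<noteq> {}"
    and is_filter_in_subset: "C \<subseteq> D"
    and is_filter_in_Int: "E \<in> C \<Longrightarrow> F \<in> C \<Longrightarrow> E \<inter> F \<in> C"
    and is_filter_in_upward: "E \<in> C \<Longrightarrow> F \<in> D \<Longrightarrow> E \<subseteq> F \<Longrightarrow> F \<in> C"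
  using assms by (auto simp: is_filter_in_def)

lemma is_maximal_filter_in_filter: "is_maximal_filter_in D C \<Longrightarrow> is_filter_in D C"
  by (simp add: is_maximal_filter_in_def)

lemma is_filter_in_Union_chain:
  assumes "X \<noteq> {}" and "\<And>A. A \<in> X \<Longrightarrow> is_filter_in D A" and "chain\<^sub>\<subseteq> X"
  shows "is_filter_in D (\<Union>X)"
  unfolding is_filter_in_def
proof (intro conjI ballI impI)
  show "\<Union>X \<noteq> {}" "\<Union>X \<subseteq> D"
    using assms(1,2) is_filter_in_nonempty is_filter_in_subset by blast+
next
  fix E F assume "E \<in> \<Union>X" "F \<in> \<Union>X"
  then obtain A B where AB: "A \<in> X" "B \<in> X" "E \<in> A" "F \<in> B" by blast
  with \<open>chain\<^sub>\<subseteq> X\<close> have "E \<in> A \<union> B \<and> F \<in> A \<union> B \<and> (A \<union> B = A \<or> A \<union> B = B)"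
    unfolding chain_subset_def by blast
  then show "E \<inter> F \<in> \<Union>X"
    using AB assms(2) is_filter_in_Int by (metis UnionI)
next
  fix E F assume "E \<in> \<Union>X" "F \<in> D" "E \<subseteq> F"
  then show "F \<in> \<Union>X" using assms(2) is_filter_in_upward by blast
qed

lemma uncoverable_Union:
  assumes "\<And>A. A \<in> X \<Longrightarrow> uncoverable D A"
  shows "uncoverable D (\<Union>X)"
  using assms unfolding uncoverable_def covers_def by blast

lemma exists_maximal_filter_above:
  assumes "is_filter_in D C"
  shows "\<exists>M. is_maximal_filter_in D M \<and> C \<subseteq> M"
proof -
  let ?A = "{C'. is_filter_in D C' \<and> C \<subseteq> C'}"
  have "\<exists>M\<in>?A. \<forall>C'\<in>?A. M \<subseteq> C' \<longrightarrow> C' = M"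
  proof (rule subset_Zorn_nonempty)
    show "?A \<noteq> {}" using assms by blast
  next
    fix X assume "X \<noteq> {}" "subset.chain ?A X"
    then have "X \<subseteq> ?A" "chain\<^sub>\<subseteq> X"
      by (auto simp: subset_chain_def chain_subset_def)
    with \<open>X \<noteq> {}\<close> show "\<Union>X \<in> ?A"
      using is_filter_in_Union_chain by blast
  qed
  then obtain M where "M \<in> ?A" and max: "\<forall>C'\<in>?A. M \<subseteq> C' \<longrightarrow> C' = M" ..
  moreover have "C' = M" if "is_filter_in D C'" "M \<subseteq> C'" for C'
    using \<open>M \<in> ?A\<close> max that by blast
  ultimately show ?thesis unfolding is_maximal_filter_in_def by blast
qed

locale meet_closed_family =
  fixes D :: "'b set set"
  assumes empty_notin: "{} \<notin> D"
    and Int_closed: "E \<in> D \<Longrightarrow> F \<in> D \<Longrightarrow> E \<inter> F \<noteq> {} \<Longrightarrow> E \<inter> F \<in> D"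
begin

lemma principal_filter:
  assumes "E \<in> D"
  shows "is_filter_in D {F \<in> D. E \<subseteq> F}"
  unfolding is_filter_in_def
proof (intro conjI ballI impI)
  fix F1 F2 assume F: "F1 \<in> {F \<in> D. E \<subseteq> F}" "F2 \<in> {F \<in> D. E \<subseteq> F}"
  then have "E \<subseteq> F1 \<inter> F2" by blast
  moreover have "E \<noteq> {}" using assms empty_notin by blast
  ultimately show "F1 \<inter> F2 \<in> {F \<in> D. E \<subseteq> F}"
    using F Int_closed[of F1 F2] by blast
qed (use assms in auto)

lemma filter_generated_with:
  assumes filt: "is_filter_in D C" and "G \<in> D" and meets: "\<And>E. E \<in> C \<Longrightarrow> E \<inter> G \<noteq> {}"
  shows "is_filter_in D {H \<in> D. \<exists>E\<in>C. E \<inter> G \<subseteq> H}"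
  unfolding is_filter_in_def
proof (intro conjI ballI impI)
  show "{H \<in> D. \<exists>E\<in>C. E \<inter> G \<subseteq> H} \<noteq> {}"
    using \<open>G \<in> D\<close> is_filter_in_nonempty[OF filt] by blast
next
  fix H1 H2 assume "H1 \<in> {H \<in> D. \<exists>E\<in>C. E \<inter> G \<subseteq> H}" "H2 \<in> {H \<in> D. \<exists>E\<in>C. E \<inter> G \<subseteq> H}"
  then obtain E1 E2 where E: "E1 \<in> C" "E2 \<in> C" "E1 \<inter> G \<subseteq> H1" "E2 \<inter> G \<subseteq> H2" "H1 \<in> D" "H2 \<in> D"
    by blast
  have "E1 \<inter> E2 \<in> C" using E is_filter_in_Int[OF filt] by blast
  moreover from this have "(E1 \<inter> E2) \<inter> G \<noteq> {}" by (rule meets)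
  moreover have "(E1 \<inter> E2) \<inter> G \<subseteq> H1 \<inter> H2" using E by blast
  ultimately have "H1 \<inter> H2 \<in> D" "\<exists>E\<in>C. E \<inter> G \<subseteq> H1 \<inter> H2"
    using E Int_closed[of H1 H2] by blast+
  then show "H1 \<inter> H2 \<in> {H \<in> D. \<exists>E\<in>C. E \<inter> G \<subseteq> H}" by blast
qed auto

lemma maximal_filter_mem_if_meets:
  assumes max: "is_maximal_filter_in D C" and "G \<in> D" and meets: "\<And>E. E \<in> C \<Longrightarrow> E \<inter> G \<noteq> {}"
  shows "G \<in> C"
proof -
  note filt = is_maximal_filter_in_filter[OF max]
  let ?C' = "{H \<in> D. \<exists>E\<in>C. E \<inter> G \<subseteq> H}"
  have "C \<subseteq> ?C'" using is_filter_in_subset[OF filt] by blast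
  with max filter_generated_with[OF filt \<open>G \<in> D\<close> meets] have "?C' = C"
    by (simp add: is_maximal_filter_in_def)
  moreover have "G \<in> ?C'" using \<open>G \<in> D\<close> is_filter_in_nonempty[OF filt] by blast
  ultimately show ?thesis by simp
qed

lemma maximal_filter_avoids_finite:
  assumes max: "is_maximal_filter_in D C" and "finite F" "F \<subseteq> D" "F \<inter> C = {}"
  shows "\<exists>E\<in>C. \<forall>G\<in>F. E \<inter> G = {}"
  using \<open>finite F\<close> \<open>F \<subseteq> D\<close> \<open>F \<inter> C = {}\<close>
proof (induction F rule: finite_induct)
  case empty
  from is_filter_in_nonempty[OF is_maximal_filter_in_filter[OF max]] show ?case by blast
next
  case (insert G F)
  then obtain E where E: "E \<in> C" "\<forall>G'\<in>F. E \<inter> G' = {}" by auto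
  have "G \<in> D" "G \<notin> C" using insert.prems by auto
  then obtain E' where E': "E' \<in> C" "E' \<inter> G = {}"
    using maximal_filter_mem_if_meets[OF max, of G] by auto
  have "E \<inter> E' \<in> C"
    using E(1) E'(1) by (rule is_filter_in_Int[OF is_maximal_filter_in_filter[OF max]])
  moreover have "\<forall>G'\<in>insert G F. (E \<inter> E') \<inter> G' = {}" using E(2) E'(2) by blast
  ultimately show ?case ..
qed

lemma maximal_filter_uncoverable:
  assumes max: "is_maximal_filter_in D C"
  shows "uncoverable D C"
  unfolding uncoverable_def covers_def
proof (intro allI impI notI)
  note filt = is_maximal_filter_in_filter[OF max]
  fix F assume F: "finite F \<and> F \<subseteq> D \<and> F \<inter> C = {}" and "\<exists>E\<in>C. E \<subseteq> \<Union>F"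
  then obtain E where E: "E \<in> C" "E \<subseteq> \<Union>F" by blast
  have "\<exists>E'\<in>C. \<forall>G\<in>F. E' \<inter> G = {}"
    using F by (intro maximal_filter_avoids_finite[OF max]) simp_all
  then obtain E' where E': "E' \<in> C" "\<forall>G\<in>F. E' \<inter> G = {}" ..
  have "E \<inter> E' \<in> D" using is_filter_in_Int[OF filt E(1) E'(1)] is_filter_in_subset[OF filt] by blast
  moreover have "E \<inter> E' = {}" using E(2) E'(2) by blast
  ultimately show False using empty_notin by simp
qed

abbreviation star :: "'b set set set" where
  "star \<equiv> {C. is_filter_in D C \<and> uncoverable D C}"

lemma maximal_filter_in_star: "is_maximal_filter_in D C \<Longrightarrow> C \<in> star"
  using maximal_filter_uncoverable is_maximal_filter_in_filter by blast

lemma star_chain_has_upper_bound: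
  assumes "D \<noteq> {}" and "X \<subseteq> star" and "chain\<^sub>\<subseteq> X"
  shows "\<exists>U\<in>star. \<forall>A\<in>X. A \<subseteq> U"
proof (cases "X = {}")
  case True
  obtain E where "E \<in> D" using \<open>D \<noteq> {}\<close> by blast
  then obtain M where "is_maximal_filter_in D M"
    using exists_maximal_filter_above principal_filter by blast
  with True show ?thesis using maximal_filter_in_star by blast
next
  case False
  with assms(2,3) have "\<Union>X \<in> star"
    by (auto intro!: is_filter_in_Union_chain uncoverable_Union)
  then show ?thesis by blast
qed

lemma maximal_in_star_is_maximal_filter:
  assumes "C \<in> star" and max: "\<And>C'. C' \<in> star \<Longrightarrow> C \<subseteq> C' \<Longrightarrow> C' = C"
  shows "is_maximal_filter_in D C"
  unfolding is_maximal_filter_in_def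
proof (intro conjI allI impI)
  show "is_filter_in D C" using assms(1) by simp
  fix C' assume C': "is_filter_in D C' \<and> C \<subseteq> C'"
  then obtain M where M: "is_maximal_filter_in D M" "C' \<subseteq> M"
    using exists_maximal_filter_above by blast
  with C' max[of M] maximal_filter_in_star have "M = C" by blast
  with M C' show "C' = C" by blast
qed

end

section \<open>Zigzag maps\<close>

lemma lcsc_left_cancel:
  "lcsc Obj Mor s r idm cmp \<Longrightarrow> a \<in> Mor \<Longrightarrow> b \<in> Mor \<Longrightarrow> c \<in> Mor \<Longrightarrow>
   s a = r b \<Longrightarrow> s a = r c \<Longrightarrow> cmp a b = cmp a c \<Longrightarrow> b = c"
  unfolding lcsc_def by blast

lemma lcsc_idm:
  assumes "lcsc Obj Mor s r idm cmp" and "v \<in> Obj"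
  shows "idm v \<in> Mor" "s (idm v) = v" "r (idm v) = v"
  using assms unfolding lcsc_def by blast+

definition zz_reverse :: "('a \<times> 'a) list \<Rightarrow> ('a \<times> 'a) list" where
  "zz_reverse zs = rev (map prod.swap zs)"

lemma zz_map_append:
  "zz_map Mor s r cmp (xs @ ys) g = Option.bind (zz_map Mor s r cmp ys g) (zz_map Mor s r cmp xs)"
proof (induction xs)
  case (Cons p xs)
  then show ?case by (cases p) simp
qed simp

lemma sigma_map_cmp:
  assumes L: "lcsc Obj Mor s r idm cmp" and "a \<in> Mor" "e \<in> Mor" "r e = s a"
  shows "sigma_map Mor s r cmp a (cmp a e) = Some e"
proof -
  have "(THE x. x \<in> Mor \<and> r x = s a \<and> cmp a x = cmp a e) = e"
    using assms lcsc_left_cancel[OF L] by (intro the_equality) auto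
  then show ?thesis unfolding sigma_map_def using assms by auto
qed

lemma sigma_tau_inverse:
  assumes L: "lcsc Obj Mor s r idm cmp" and "a \<in> Mor" "b \<in> Mor"
    and h: "Option.bind (tau_map Mor s r cmp b d) (sigma_map Mor s r cmp a) = Some h"
  shows "Option.bind (tau_map Mor s r cmp a h) (sigma_map Mor s r cmp b) = Some d"
proof -
  from h have d: "d \<in> Mor" "r d = s b" and sg: "sigma_map Mor s r cmp a (cmp b d) = Some h"
    by (auto simp: tau_map_def split: if_splits)
  from sg obtain e where e: "e \<in> Mor" "r e = s a" "cmp a e = cmp b d"
    unfolding sigma_map_def by (auto split: if_splits)
  with sg sigma_map_cmp[OF L \<open>a \<in> Mor\<close> e(1,2)] have "h = e" by simp
  with e d sigma_map_cmp[OF L \<open>b \<in> Mor\<close> d] show ?thesis by (simp add: tau_map_def)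
qed

lemma zz_map_reverse:
  assumes L: "lcsc Obj Mor s r idm cmp" and "\<forall>p\<in>set zs. fst p \<in> Mor \<and> snd p \<in> Mor"
    and "zz_map Mor s r cmp zs g = Some h"
  shows "zz_map Mor s r cmp (zz_reverse zs) h = Some g"
  using assms(2,3)
proof (induction zs arbitrary: h)
  case Nil then show ?case by (simp add: zz_reverse_def)
next
  case (Cons p zs)
  obtain a b where p: "p = (a, b)" by fastforce
  from Cons.prems obtain d where d: "zz_map Mor s r cmp zs g = Some d"
    and h: "Option.bind (tau_map Mor s r cmp b d) (sigma_map Mor s r cmp a) = Some h"
    by (auto simp: p bind_eq_Some_conv)
  have "a \<in> Mor" "b \<in> Mor" using Cons.prems p by auto
  note inverse_step = sigma_tau_inverse[OF L this h]
  have "zz_map Mor s r cmp (zz_reverse zs) d = Some g" using Cons.IH Cons.prems d by simp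
  moreover have "zz_reverse (p # zs) = zz_reverse zs @ [(b, a)]" by (simp add: zz_reverse_def p)
  ultimately show ?case using inverse_step by (simp add: zz_map_append)
qed

lemma zz_map_reverse_append_self:
  assumes L: "lcsc Obj Mor s r idm cmp" and "\<forall>p\<in>set zs. fst p \<in> Mor \<and> snd p \<in> Mor"
  shows "zz_map Mor s r cmp (zz_reverse zs @ zs) g = map_option (\<lambda>_. g) (zz_map Mor s r cmp zs g)"
  using zz_map_reverse[OF assms] by (cases "zz_map Mor s r cmp zs g") (auto simp: zz_map_append)

lemma is_zigzag_iff_successively: "is_zigzag Mor s r zs \<longleftrightarrow> zs \<noteq> [] \<and>
     (\<forall>p\<in>set zs. fst p \<in> Mor \<and> snd p \<in> Mor \<and> r (fst p) = r (snd p)) \<and>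
     successively (\<lambda>p q. s (fst q) = s (snd p)) zs"
  unfolding is_zigzag_def successively_conv_nth by blast

lemma is_zigzag_append:
  "is_zigzag Mor s r xs \<Longrightarrow> is_zigzag Mor s r ys \<Longrightarrow>
   s (fst (hd ys)) = s (snd (last xs)) \<Longrightarrow> is_zigzag Mor s r (xs @ ys)"
  unfolding is_zigzag_iff_successively by (auto simp: successively_append_iff)

lemma is_zigzag_reverse_append_self:
  assumes "is_zigzag Mor s r zs"
  shows "is_zigzag Mor s r (zz_reverse zs @ zs)"
    and "s (fst (hd (zz_reverse zs @ zs))) = zz_src s zs"
    and "zz_src s (zz_reverse zs @ zs) = zz_src s zs"
proof -
  have "zs \<noteq> []" using assms by (simp add: is_zigzag_def)
  have "is_zigzag Mor s r (zz_reverse zs)"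
    using assms unfolding is_zigzag_iff_successively zz_reverse_def
    by (auto simp: successively_map eq_commute)
  with assms \<open>zs \<noteq> []\<close> show "is_zigzag Mor s r (zz_reverse zs @ zs)"
    by (intro is_zigzag_append) (auto simp: zz_reverse_def last_rev hd_map)
  show "s (fst (hd (zz_reverse zs @ zs))) = zz_src s zs"
    "zz_src s (zz_reverse zs @ zs) = zz_src s zs"
    using \<open>zs \<noteq> []\<close> by (simp_all add: zz_reverse_def zz_src_def hd_rev last_map)
qed

section \<open>The family \<open>\<D>\<^sup>(\<^sup>0\<^sup>)\<^sub>v\<close>\<close>

lemma D0_Int:
  assumes L: "lcsc Obj Mor s r idm cmp"
    and "E \<in> D0 Mor s r cmp v" "F \<in> D0 Mor s r cmp v" "E \<inter> F \<noteq> {}"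
  shows "E \<inter> F \<in> D0 Mor s r cmp v"
proof -
  from assms obtain z x where z: "is_zigzag Mor s r z" "zz_src s z = v" "E = zz_dom Mor s r cmp z"
    and x: "is_zigzag Mor s r x" "zz_src s x = v" "F = zz_dom Mor s r cmp x"
    unfolding D0_def by auto
  define W where "W = (zz_reverse z @ z) @ (zz_reverse x @ x)"
  note Z = is_zigzag_reverse_append_self[OF z(1)] and X = is_zigzag_reverse_append_self[OF x(1)]
  have src: "zz_src s W = v"
    using X(1) x(2) by (simp add: W_def zz_src_def X(3)[unfolded zz_src_def] is_zigzag_def)
  have zigzag: "is_zigzag Mor s r W"
    unfolding W_def using Z(1) X(1)
  proof (rule is_zigzag_append)
    show "s (fst (hd (zz_reverse x @ x))) = s (snd (last (zz_reverse z @ z)))"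
      using X(2) Z(3) x(2) z(2) by (simp add: zz_src_def)
  qed
  have "zz_map Mor s r cmp W g \<noteq> None \<longleftrightarrow>
      zz_map Mor s r cmp z g \<noteq> None \<and> zz_map Mor s r cmp x g \<noteq> None" for g
    using z(1) x(1) unfolding W_def zz_map_append[of _ _ _ _ "zz_reverse z @ z"]
    by (cases "zz_map Mor s r cmp x g")
       (simp_all add: zz_map_reverse_append_self[OF L] is_zigzag_def)
  then have "zz_dom Mor s r cmp W = E \<inter> F"
    using src z(2,3) x(2,3) by (auto simp: zz_dom_def)
  with zigzag src show ?thesis unfolding D0_def using assms(4) by blast
qed

lemma D0_meet_closed:
  assumes "lcsc Obj Mor s r idm cmp"
  shows "meet_closed_family (D0 Mor s r cmp v)"
proof
  show "{} \<notin> D0 Mor s r cmp v" by (simp add: D0_def)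
qed (rule D0_Int[OF assms])

lemma D0_nonempty:
  assumes L: "lcsc Obj Mor s r idm cmp" and "v \<in> Obj"
  shows "D0 Mor s r cmp v \<noteq> {}"
proof -
  note i = lcsc_idm[OF assms]
  then have "zz_map Mor s r cmp [(idm v, idm v)] (idm v) = Some (idm v)"
    using sigma_map_cmp[OF L, of "idm v" "idm v"] by (simp add: tau_map_def)
  with i have "idm v \<in> zz_dom Mor s r cmp [(idm v, idm v)]" "is_zigzag Mor s r [(idm v, idm v)]"
    "zz_src s [(idm v, idm v)] = v"
    by (simp_all add: is_zigzag_def zz_src_def zz_dom_def)
  then show ?thesis unfolding D0_def by blast
qed

theorem mainTheorem10:
  fixes Obj :: "'o set" and Mor :: "'a set" and s r :: "'a \<Rightarrow> 'o"
    and idm :: "'o \<Rightarrow> 'a" and cmp :: "'a \<Rightarrow> 'a \<Rightarrow> 'a" and v :: 'o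
  assumes "lcsc Obj Mor s r idm cmp" and "v \<in> Obj"
  shows "(\<forall>C. is_maximal_filter_in (D0 Mor s r cmp v) C \<longrightarrow> C \<in> vLambda_star Mor s r cmp v)
    \<and> (\<forall>X. X \<subseteq> vLambda_star Mor s r cmp v \<and> (\<forall>A\<in>X. \<forall>B\<in>X. A \<subseteq> B \<or> B \<subseteq> A) \<longrightarrow>
           (\<exists>U\<in>vLambda_star Mor s r cmp v. \<forall>A\<in>X. A \<subseteq> U))
    \<and> (\<forall>C. C \<in> vLambda_star Mor s r cmp v \<and>
           (\<forall>C'\<in>vLambda_star Mor s r cmp v. C \<subseteq> C' \<longrightarrow> C' = C)
           \<longrightarrow> is_maximal_filter_in (D0 Mor s r cmp v) C)"
proof -
  interpret meet_closed_family "D0 Mor s r cmp v"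
    using assms(1) by (rule D0_meet_closed)
  have star: "vLambda_star Mor s r cmp v = star"
    by (simp add: vLambda_star_def uncoverable_def)
  show ?thesis
    unfolding star
  proof (intro conjI allI impI)
    fix C assume "is_maximal_filter_in (D0 Mor s r cmp v) C"
    then show "C \<in> star" by (rule maximal_filter_in_star)
  next
    fix X assume "X \<subseteq> star \<and> (\<forall>A\<in>X. \<forall>B\<in>X. A \<subseteq> B \<or> B \<subseteq> A)"
    then show "\<exists>U\<in>star. \<forall>A\<in>X. A \<subseteq> U"
      by (intro star_chain_has_upper_bound[OF D0_nonempty[OF assms]]) (simp_all add: chain_subset_def)
  next
    fix C assume "C \<in> star \<and> (\<forall>C'\<in>star. C \<subseteq> C' \<longrightarrow> C' = C)"
    then show "is_maximal_filter_in (D0 Mor s r cmp v) C"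
      by (intro maximal_in_star_is_maximal_filter) blast+
  qed
qed

end
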